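(* Let $P(z)=\sum_{k=1}^K a_k(1-z)^k$, with $a_k\in\mathbb{C}$, be a polynomial mapping the unit disc $\mathbb{D}$ into $\overline{\mathbb{C}_0}=\{w:\operatorname{Re}w\ge0\}$. Then either $P\equiv0$ or $a_1>0$. *)

theory Defs
  imports "HOL-Analysis.Analysis"
begin

end

theory Submission
  imports Defs
begin

text \<open>Let \<open>m\<close> be the index of the first nonzero coefficient. Substituting \<open>z = 1 - t u\<close>
  with \<open>Re u > 0\<close> and letting \<open>t \<rightarrow> 0\<^sup>+\<close>, the term \<open>a\<^sub>m (t u)\<^sup>m\<close> dominates, so
  \<open>Re (a\<^sub>m u\<^sup>m) \<ge> 0\<close> on the whole right half-plane. For \<open>m \<ge> 2\<close> the \<open>m\<close>-th powers of the
  right half-plane cover everything off the closed negative real axis, which is incompatible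
  with \<open>a\<^sub>m \<noteq> 0\<close>. Hence \<open>m = 1\<close>, and \<open>Re (a\<^sub>1 u) \<ge> 0\<close> for all \<open>Re u > 0\<close> forces \<open>a\<^sub>1 > 0\<close>.\<close>

lemma eventually_one_minus_in_unit_disc:
  fixes u :: complex
  assumes "Re u > 0"
  shows "\<forall>\<^sub>F t in at_right 0. 1 - of_real t * u \<in> ball 0 1"
proof -
  have "u \<noteq> 0" using assms by auto
  with assms have "Re u / (cmod u)\<^sup>2 > 0" by simp
  then have "\<forall>\<^sub>F t in at_right 0. 0 < t \<and> t < Re u / (cmod u)\<^sup>2"
    by (auto simp: eventually_at_right_field)
  then show ?thesis
  proof (rule eventually_mono)
    fix t :: real
    assume t: "0 < t \<and> t < Re u / (cmod u)\<^sup>2"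
    from \<open>u \<noteq> 0\<close> have "t * (cmod u)\<^sup>2 < Re u" using t by (simp add: pos_less_divide_eq)
    then have "t * (2 * Re u - t * (cmod u)\<^sup>2) > 0"
      using t assms by (intro mult_pos_pos) auto
    moreover have "(cmod (1 - of_real t * u))\<^sup>2 = 1 - t * (2 * Re u - t * (cmod u)\<^sup>2)"
      unfolding cmod_power2 by (simp add: power2_eq_square algebra_simps)
    ultimately have "(cmod (1 - of_real t * u))\<^sup>2 < 1\<^sup>2" by simp
    then show "1 - of_real t * u \<in> ball 0 1"
      by (simp add: power_less_imp_less_base)
  qed
qed

lemma Re_lowest_term_nonneg:
  fixes c :: "nat \<Rightarrow> complex" and u :: complex
  assumes "m \<le> K"
    and "\<forall>\<^sub>F t in at_right 0. Re (\<Sum>k=m..K. c k * (of_real t * u) ^ k) \<ge> 0"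
  shows "Re (c m * u ^ m) \<ge> 0"
proof -
  define g where "g t = (\<Sum>k=m..K. c k * of_real t ^ (k - m) * u ^ k)" for t :: real
  have "g 0 = c m * u ^ m"
    using assms(1) by (simp add: g_def sum.atLeast_Suc_atMost sum.neutral)
  moreover have "((\<lambda>t. Re (g t)) \<longlongrightarrow> Re (g 0)) (at_right 0)"
    unfolding g_def by (intro tendsto_intros)
  moreover have "\<forall>\<^sub>F t in at_right 0. Re (g t) \<ge> 0"
    using assms(2) eventually_at_right_less
  proof eventually_elim
    case (elim t)
    have "(\<Sum>k=m..K. c k * (of_real t * u) ^ k) = of_real (t ^ m) * g t"
      unfolding g_def sum_distrib_left
    proof (rule sum.cong)
      fix k assume "k \<in> {m..K}"
      then have "(of_real t :: complex) ^ k = of_real t ^ m * of_real t ^ (k - m)"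
        by (metis le_add_diff_inverse atLeastAtMost_iff power_add)
      then show "c k * (of_real t * u) ^ k = of_real (t ^ m) * (c k * of_real t ^ (k - m) * u ^ k)"
        by (simp add: power_mult_distrib)
    qed simp
    with elim have "t ^ m * Re (g t) \<ge> 0" by simp
    moreover have "t ^ m > 0" using \<open>t > 0\<close> by simp
    ultimately show ?case by (simp add: zero_le_mult_iff)
  qed
  ultimately show ?thesis
    by (metis tendsto_lowerbound trivial_limit_at_right_real)
qed

lemma Re_lowest_coeff_nonneg_on_right_half_plane:
  fixes a :: "nat \<Rightarrow> complex" and u :: complex
  assumes "\<And>z. z \<in> ball 0 1 \<Longrightarrow> Re (\<Sum>k=1..K. a k * (1 - z) ^ k) \<ge> 0"
    and "m \<in> {1..K}" and "\<forall>k\<in>{1..<m}. a k = 0" and "Re u > 0"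
  shows "Re (a m * u ^ m) \<ge> 0"
proof (rule Re_lowest_term_nonneg)
  have drop_zeros: "(\<Sum>k=1..K. a k * w ^ k) = (\<Sum>k=m..K. a k * w ^ k)" for w :: complex
    using assms(2,3) by (intro sum.mono_neutral_right) auto
  show "\<forall>\<^sub>F t in at_right 0. Re (\<Sum>k=m..K. a k * (of_real t * u) ^ k) \<ge> 0"
    using eventually_one_minus_in_unit_disc[OF assms(4)]
  proof (rule eventually_mono)
    fix t :: real
    assume "1 - of_real t * u \<in> ball 0 1"
    from assms(1)[OF this] have "Re (\<Sum>k=1..K. a k * (of_real t * u) ^ k) \<ge> 0" by simp
    then show "Re (\<Sum>k=m..K. a k * (of_real t * u) ^ k) \<ge> 0" by (simp only: drop_zeros)
  qed
qed (use assms(2) in simp)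

lemma nonneg_real_if_Re_mult_nonneg_on_right_half_plane:
  fixes b :: complex
  assumes "\<And>u. Re u > 0 \<Longrightarrow> Re (b * u) \<ge> 0"
  shows "b \<in> \<real> \<and> Re b \<ge> 0"
proof -
  have Re_Im: "Re b - Im b * s \<ge> 0" for s
    using assms[of "1 + \<i> * of_real s"] by simp
  have "Im b = 0"
  proof (rule ccontr)
    assume "Im b \<noteq> 0"
    with Re_Im[of "(Re b + 1) / Im b"] show False by simp
  qed
  with Re_Im[of 0] show ?thesis by (simp add: complex_is_Real_iff)
qed

lemma exists_root_in_right_half_plane:
  fixes v :: complex
  assumes "m \<ge> 2" and "v \<notin> \<real>\<^sub>\<le>\<^sub>0"
  shows "\<exists>u. Re u > 0 \<and> u ^ m = v"
proof (intro exI conjI)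
  define u where "u = exp (Ln v / of_nat m)"
  have "v \<noteq> 0" using assms(2) by auto
  have "u ^ m = exp (of_nat m * (Ln v / of_nat m))"
    unfolding u_def by (rule exp_of_nat_mult[symmetric])
  also have "\<dots> = v" using assms(1) \<open>v \<noteq> 0\<close> by simp
  finally show "u ^ m = v" .
  have "\<bar>Im (Ln v)\<bar> < pi"
    using Im_Ln_less_pi[OF assms(2)] mpi_less_Im_Ln[OF \<open>v \<noteq> 0\<close>] by linarith
  also have "pi \<le> pi / 2 * real m"
    using assms(1) by (simp add: pi_gt_zero)
  finally have "\<bar>Im (Ln v) / real m\<bar> < pi / 2"
    using assms(1) by (simp add: divide_less_eq)
  then have "cos (Im (Ln v) / real m) > 0"
    unfolding abs_less_iff by (intro cos_gt_zero_pi) linarith+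
  then show "Re u > 0" by (simp add: u_def Re_exp Im_divide_of_nat)
qed

lemma exists_right_half_plane_Re_mult_power_neg:
  fixes b :: complex
  assumes "m \<ge> 2" and "b \<noteq> 0"
  shows "\<exists>u. Re u > 0 \<and> Re (b * u ^ m) < 0"
proof -
  \<comment> \<open>\<open>b v = -|b|\<^sup>2\<close> up to an imaginary term; adding \<open>\<i>\<close> keeps \<open>v\<close> off the negative reals when \<open>b\<close> is real\<close>
  define v where "v = (if Im b = 0 then - cnj b + \<i> else - cnj b)"
  have "v \<notin> \<real>\<^sub>\<le>\<^sub>0"
    using assms(2) by (auto simp: v_def complex_nonpos_Reals_iff complex_eq_iff)
  moreover have "Re (b * v) < 0"
  proof -
    have "Re b ^ 2 + Im b ^ 2 > 0"
      using assms(2) by (simp add: sum_power2_gt_zero_iff complex_eq_iff)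
    then show ?thesis by (auto simp: v_def power2_eq_square)
  qed
  ultimately show ?thesis
    using exists_root_in_right_half_plane[OF assms(1)] by metis
qed

theorem lemma4p3:
  fixes a :: "nat \<Rightarrow> complex" and K :: nat
  assumes "\<And>z. z \<in> ball 0 1 \<Longrightarrow> Re (\<Sum>k=1..K. a k * (1 - z) ^ k) \<ge> 0"
  shows "(\<forall>z. (\<Sum>k=1..K. a k * (1 - z) ^ k) = 0) \<or> (a 1 \<in> \<real> \<and> Re (a 1) > 0)"
proof (cases "\<forall>k\<in>{1..K}. a k = 0")
  case True
  then show ?thesis by simp
next
  case False
  then obtain m where m: "m \<in> {1..K}" "a m \<noteq> 0" and below: "\<forall>k\<in>{1..<m}. a k = 0"
    using exists_least_iff[of "\<lambda>k. k \<in> {1..K} \<and> a k \<noteq> 0", THEN iffD1] by force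
  have lowest: "Re (a m * u ^ m) \<ge> 0" if "Re u > 0" for u
    using Re_lowest_coeff_nonneg_on_right_half_plane[OF assms m(1) below that] .
  have "m = 1"
  proof (rule ccontr)
    assume "m \<noteq> 1"
    with m(1) have "m \<ge> 2" by simp
    then obtain u where "Re u > 0" "Re (a m * u ^ m) < 0"
      using exists_right_half_plane_Re_mult_power_neg m(2) by blast
    with lowest show False by fastforce
  qed
  with lowest have "a 1 \<in> \<real> \<and> Re (a 1) \<ge> 0"
    by (intro nonneg_real_if_Re_mult_nonneg_on_right_half_plane) auto
  with m(2) \<open>m = 1\<close> show ?thesis
    by (auto simp: complex_is_Real_iff complex_eq_iff)
qed

end
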